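(* Let $(M,g)$ be a Riemannian manifold of dimension $2m=2n+2$ ($n\ge1$) admitting, on an open set $U\subset M$, an orthonormal frame $\mathbf k,\mathbf t,\mathbf x_1,\mathbf y_1,\dots,\mathbf x_n,\mathbf y_n$ such that $[\mathbf x_i,\mathbf x_j]=[\mathbf x_i,\mathbf y_j]=[\mathbf y_i,\mathbf y_j]=0$ for $i\neq j$, and $$[\mathbf k,\mathbf t]=L(\mathbf k+\mathbf t),\quad [\mathbf x_i,\mathbf y_i]=N_i(\mathbf k+\mathbf t),$$ $$[\mathbf k,\mathbf x_i]=A_i\mathbf x_i+B_i\mathbf y_i,\quad [\mathbf k,\mathbf y_i]=C_i\mathbf x_i+D_i\mathbf y_i,\quad [\mathbf t,\mathbf x_i]=E_i\mathbf x_i+F_i\mathbf y_i,\quad [\mathbf t,\mathbf y_i]=G_i\mathbf x_i+H_i\mathbf y_i,$$ for smooth functions $A_i,B_i,C_i,D_i,E_i,F_i,G_i,H_i,L,N_i$ on $U$ satisfying, for $i=1,\dots,n$, $$A_i-D_i=F_i+G_i,\quad B_i+C_i=H_i-E_i,\quad N_i=A_i+D_i=-(E_i+H_i).$$ Let $J$ be the almost complex structure on $U$ defined by $J\mathbf k=\mathbf t$, $J\mathbf t=-\mathbf k$, $J\mathbf x_i=\mathbf y_i$, $J\mathbf y_i=-\mathbf x_i$. Then $(g,J)$ is a Kähler structure on $U$. *)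

theory Defs
  imports "HOL-Analysis.Analysis"
begin

text \<open>Local setting: the open set U is regarded as an open subset of a Euclidean
  space 'a (a coordinate chart); vector fields are maps 'a \<Rightarrow> 'a,
  a Riemannian metric is g :: 'a \<Rightarrow> 'a \<Rightarrow> 'a \<Rightarrow> real
  (g p is the inner product on the tangent space at p), and an almost complex
  structure is J :: 'a \<Rightarrow> 'a \<Rightarrow> 'a (J p is an endomorphism of the tangent space at p).\<close>

fun Ck_on :: "nat \<Rightarrow> 'a::euclidean_space set \<Rightarrow> ('a \<Rightarrow> 'b::real_normed_vector) \<Rightarrow> bool" where
  "Ck_on 0 U f = continuous_on U f"
| "Ck_on (Suc k) U f =
     ((\<forall>p\<in>U. f differentiable (at p)) \<and>
      (\<forall>v. Ck_on k U (\<lambda>p. frechet_derivative f (at p) v)))"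

definition smooth_on :: "'a::euclidean_space set \<Rightarrow> ('a \<Rightarrow> 'b::real_normed_vector) \<Rightarrow> bool" where
  "smooth_on U f \<longleftrightarrow> (\<forall>k. Ck_on k U f)"

definition vf_apply :: "('a::euclidean_space \<Rightarrow> 'a) \<Rightarrow> ('a \<Rightarrow> real) \<Rightarrow> 'a \<Rightarrow> real" where
  "vf_apply X f p = frechet_derivative f (at p) (X p)"

definition lie_bracket :: "('a::euclidean_space \<Rightarrow> 'a) \<Rightarrow> ('a \<Rightarrow> 'a) \<Rightarrow> 'a \<Rightarrow> 'a" where
  "lie_bracket X Y p = frechet_derivative Y (at p) (X p) - frechet_derivative X (at p) (Y p)"

definition riemannian_metric :: "'a::euclidean_space set \<Rightarrow> ('a \<Rightarrow> 'a \<Rightarrow> 'a \<Rightarrow> real) \<Rightarrow> bool" where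
  "riemannian_metric U g \<longleftrightarrow>
     (\<forall>p\<in>U. bilinear (g p) \<and> (\<forall>v w. g p v w = g p w v) \<and> (\<forall>v. v \<noteq> 0 \<longrightarrow> g p v v > 0)) \<and>
     (\<forall>v w. smooth_on U (\<lambda>p. g p v w))"

definition almost_complex_structure :: "'a::euclidean_space set \<Rightarrow> ('a \<Rightarrow> 'a \<Rightarrow> 'a) \<Rightarrow> bool" where
  "almost_complex_structure U J \<longleftrightarrow>
     (\<forall>p\<in>U. linear (J p) \<and> (\<forall>v. J p (J p v) = - v)) \<and>
     (\<forall>v. smooth_on U (\<lambda>p. J p v))"

definition smooth_vector_field :: "'a::euclidean_space set \<Rightarrow> ('a \<Rightarrow> 'a) \<Rightarrow> bool" where
  "smooth_vector_field U X \<longleftrightarrow> smooth_on U X"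

definition acs_apply :: "('a \<Rightarrow> 'a \<Rightarrow> 'a) \<Rightarrow> ('a \<Rightarrow> 'a) \<Rightarrow> 'a \<Rightarrow> 'a" where
  "acs_apply J X = (\<lambda>p. J p (X p))"

definition nijenhuis :: "('a::euclidean_space \<Rightarrow> 'a \<Rightarrow> 'a) \<Rightarrow> ('a \<Rightarrow> 'a) \<Rightarrow> ('a \<Rightarrow> 'a) \<Rightarrow> 'a \<Rightarrow> 'a" where
  "nijenhuis J X Y =
     (\<lambda>p. lie_bracket (acs_apply J X) (acs_apply J Y) p
          - J p (lie_bracket (acs_apply J X) Y p)
          - J p (lie_bracket X (acs_apply J Y) p)
          - lie_bracket X Y p)"

definition fundamental_form :: "('a \<Rightarrow> 'a \<Rightarrow> 'a \<Rightarrow> real) \<Rightarrow> ('a \<Rightarrow> 'a \<Rightarrow> 'a) \<Rightarrow> ('a \<Rightarrow> 'a) \<Rightarrow> ('a \<Rightarrow> 'a) \<Rightarrow> 'a \<Rightarrow> real" where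
  "fundamental_form g J X Y = (\<lambda>p. g p (J p (X p)) (Y p))"

definition ext_deriv2 :: "(('a::euclidean_space \<Rightarrow> 'a) \<Rightarrow> ('a \<Rightarrow> 'a) \<Rightarrow> 'a \<Rightarrow> real)
     \<Rightarrow> ('a \<Rightarrow> 'a) \<Rightarrow> ('a \<Rightarrow> 'a) \<Rightarrow> ('a \<Rightarrow> 'a) \<Rightarrow> 'a \<Rightarrow> real" where
  "ext_deriv2 w X Y Z =
     (\<lambda>p. vf_apply X (w Y Z) p - vf_apply Y (w X Z) p + vf_apply Z (w X Y) p
          - w (lie_bracket X Y) Z p + w (lie_bracket X Z) Y p - w (lie_bracket Y Z) X p)"

definition kaehler_on :: "'a::euclidean_space set \<Rightarrow> ('a \<Rightarrow> 'a \<Rightarrow> 'a \<Rightarrow> real) \<Rightarrow> ('a \<Rightarrow> 'a \<Rightarrow> 'a) \<Rightarrow> bool" where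
  "kaehler_on U g J \<longleftrightarrow>
     riemannian_metric U g \<and> almost_complex_structure U J \<and>
     (\<forall>p\<in>U. \<forall>v w. g p (J p v) (J p w) = g p v w) \<and>
     (\<forall>X Y. smooth_vector_field U X \<longrightarrow> smooth_vector_field U Y \<longrightarrow>
        (\<forall>p\<in>U. nijenhuis J X Y p = 0)) \<and>
     (\<forall>X Y Z. smooth_vector_field U X \<longrightarrow> smooth_vector_field U Y \<longrightarrow> smooth_vector_field U Z \<longrightarrow>
        (\<forall>p\<in>U. ext_deriv2 (fundamental_form g J) X Y Z p = 0))"

end

theory Submission
  imports Defs
begin

(* Compatibility and J^2 = -1 hold on the orthonormal frame,
   hence everywhere by (bi)linearity.  N_J and d omega are tensorial (local and linear over
   smooth functions in each argument), so it suffices that they vanish on frame fields, on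
   which omega is constant.  By the bracket relations the only frame values that are not
   identically zero are, up to symmetry,
     N_J(k, x_i) = (D_i + F_i + G_i - A_i) x_i + (H_i - B_i - C_i - E_i) y_i,
     d omega(k, x_i, y_i) = N_i - A_i - D_i,   d omega(t, x_i, y_i) = - (N_i + E_i + H_i),
   and these vanish by the hypotheses on the structure functions. *)

section \<open>Smooth functions on open sets\<close>

lemma has_derivative_cong_open:
  assumes "open U" "p \<in> U" "\<And>q. q \<in> U \<Longrightarrow> f q = h q"
  shows "(f has_derivative D) (at p) \<longleftrightarrow> (h has_derivative D) (at p)"
  using has_derivative_transform_within_open[OF _ assms(1,2)] assms(2,3) by metis

lemma frechet_derivative_cong_open:
  assumes "open U" "p \<in> U" "\<And>q. q \<in> U \<Longrightarrow> f q = h q"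
  shows "frechet_derivative f (at p) = frechet_derivative h (at p)"
  unfolding frechet_derivative_def using has_derivative_cong_open[OF assms] by simp

lemma differentiable_cong_open:
  assumes "open U" "p \<in> U" "\<And>q. q \<in> U \<Longrightarrow> f q = h q"
  shows "f differentiable (at p) \<longleftrightarrow> h differentiable (at p)"
  unfolding differentiable_def using has_derivative_cong_open[OF assms] by simp

lemma frechet_derivative_apply:
  "(f has_derivative D) (at p) \<Longrightarrow> frechet_derivative f (at p) v = D v"
  by (simp add: frechet_derivative_at[symmetric])

lemma has_frechet_derivative:
  "f differentiable (at p) \<Longrightarrow> (f has_derivative frechet_derivative f (at p)) (at p)"
  using frechet_derivative_works by blast

context
  fixes U :: "'a::euclidean_space set"
  assumes open_U: "open U"
begin

lemma Ck_on_cong: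
  "(\<And>q. q \<in> U \<Longrightarrow> f q = h q) \<Longrightarrow> Ck_on k U f = Ck_on k U h"
proof (induction k arbitrary: f h)
  case 0
  then show ?case unfolding Ck_on.simps by (intro continuous_on_cong) auto
next
  case (Suc k)
  have "Ck_on k U (\<lambda>p. frechet_derivative f (at p) v) = Ck_on k U (\<lambda>p. frechet_derivative h (at p) v)"
    for v by (rule Suc.IH) (simp add: frechet_derivative_cong_open[OF open_U _ Suc.prems])
  moreover have "p \<in> U \<Longrightarrow> f differentiable (at p) \<longleftrightarrow> h differentiable (at p)" for p
    by (rule differentiable_cong_open[OF open_U _ Suc.prems])
  ultimately show ?case by simp
qed

lemma Ck_on_SucD: "Ck_on (Suc k) U f \<Longrightarrow> Ck_on k U f"
proof (induction k arbitrary: f)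
  case 0
  then show ?case
    by (simp add: continuous_at_imp_continuous_on differentiable_imp_continuous_within)
next
  case (Suc k)
  then show ?case by simp
qed

lemma Ck_on_SucI:
  assumes "\<And>p. p \<in> U \<Longrightarrow> (f has_derivative D p) (at p)"
    and "\<And>v. Ck_on k U (\<lambda>p. D p v)"
  shows "Ck_on (Suc k) U f"
proof -
  have "frechet_derivative f (at p) = D p" if "p \<in> U" for p
    using frechet_derivative_at[OF assms(1)[OF that]] by simp
  then have "Ck_on k U (\<lambda>p. frechet_derivative f (at p) v)" for v
    using assms(2)[of v] Ck_on_cong[of "\<lambda>p. frechet_derivative f (at p) v" "\<lambda>p. D p v"] by simp
  moreover have "\<forall>p\<in>U. f differentiable (at p)"
    using assms(1) differentiableI by blast
  ultimately show ?thesis by simp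
qed

lemma Ck_on_const: "Ck_on k U (\<lambda>_. c)"
  by (induction k arbitrary: c) simp_all

lemma Ck_on_add: "Ck_on k U f \<Longrightarrow> Ck_on k U h \<Longrightarrow> Ck_on k U (\<lambda>q. f q + h q)"
proof (induction k arbitrary: f h)
  case 0
  then show ?case by (simp add: continuous_on_add)
next
  case (Suc k)
  then show ?case
    by (intro Ck_on_SucI[where D = "\<lambda>p v. frechet_derivative f (at p) v + frechet_derivative h (at p) v"]
        has_derivative_add has_frechet_derivative Suc.IH) simp_all
qed

lemma Ck_on_bounded_bilinear:
  fixes prod :: "'b::real_normed_vector \<Rightarrow> 'c::real_normed_vector \<Rightarrow> 'd::real_normed_vector"
  assumes "bounded_bilinear prod"
  shows "Ck_on k U f \<Longrightarrow> Ck_on k U h \<Longrightarrow> Ck_on k U (\<lambda>q. prod (f q) (h q))"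
proof (induction k arbitrary: f h)
  case 0
  then show ?case using bounded_bilinear.continuous_on[OF assms] by simp
next
  case (Suc k)
  show ?case
  proof (rule Ck_on_SucI)
    show "((\<lambda>q. prod (f q) (h q)) has_derivative
        (\<lambda>v. prod (f p) (frechet_derivative h (at p) v) + prod (frechet_derivative f (at p) v) (h p))) (at p)"
      if "p \<in> U" for p
      using Suc.prems that by (intro bounded_bilinear.FDERIV[OF assms] has_frechet_derivative) simp_all
    show "Ck_on k U (\<lambda>p. prod (f p) (frechet_derivative h (at p) v) + prod (frechet_derivative f (at p) v) (h p))"
      for v using Suc.prems Ck_on_SucD[OF Suc.prems(1)] Ck_on_SucD[OF Suc.prems(2)]
      by (intro Ck_on_add Suc.IH) simp_all
  qed
qed

lemma smooth_on_cong:
  assumes "\<And>q. q \<in> U \<Longrightarrow> f q = h q"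
  shows "smooth_on U f \<longleftrightarrow> smooth_on U h"
  unfolding smooth_on_def using Ck_on_cong[OF assms] by simp

lemma smooth_on_const: "smooth_on U (\<lambda>_. c)"
  unfolding smooth_on_def by (simp add: Ck_on_const)

lemma smooth_on_add: "smooth_on U f \<Longrightarrow> smooth_on U h \<Longrightarrow> smooth_on U (\<lambda>q. f q + h q)"
  unfolding smooth_on_def by (simp add: Ck_on_add)

lemma smooth_on_bounded_bilinear:
  fixes prod :: "'b::real_normed_vector \<Rightarrow> 'c::real_normed_vector \<Rightarrow> 'd::real_normed_vector"
  shows "bounded_bilinear prod \<Longrightarrow> smooth_on U f \<Longrightarrow> smooth_on U h \<Longrightarrow> smooth_on U (\<lambda>q. prod (f q) (h q))"
  unfolding smooth_on_def by (simp add: Ck_on_bounded_bilinear)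

lemma smooth_on_scaleR:
  "smooth_on U f \<Longrightarrow> smooth_on U h \<Longrightarrow> smooth_on U (\<lambda>q. f q *\<^sub>R h q)"
  by (rule smooth_on_bounded_bilinear[OF bounded_bilinear_scaleR])

lemma smooth_on_inner:
  "smooth_on U f \<Longrightarrow> smooth_on U h \<Longrightarrow> smooth_on U (\<lambda>q. f q \<bullet> h q)"
  by (rule smooth_on_bounded_bilinear[OF bounded_bilinear_inner])

lemma smooth_on_sum:
  "finite I \<Longrightarrow> (\<And>i. i \<in> I \<Longrightarrow> smooth_on U (f i)) \<Longrightarrow> smooth_on U (\<lambda>q. \<Sum>i\<in>I. f i q)"
  by (induction I rule: finite_induct) (simp_all add: smooth_on_const smooth_on_add)

lemma smooth_on_differentiable: "smooth_on U f \<Longrightarrow> p \<in> U \<Longrightarrow> f differentiable (at p)"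
  unfolding smooth_on_def by (metis Ck_on.simps(2))

lemma smooth_on_linear_apply:
  fixes X :: "'a \<Rightarrow> 'b::euclidean_space" and M :: "'a \<Rightarrow> 'b \<Rightarrow> 'c::real_normed_vector"
  assumes "\<And>p. p \<in> U \<Longrightarrow> linear (M p)" "\<And>v. smooth_on U (\<lambda>p. M p v)" "smooth_on U X"
  shows "smooth_on U (\<lambda>p. M p (X p))"
proof -
  have expand: "M p (X p) = (\<Sum>i\<in>Basis. (X p \<bullet> i) *\<^sub>R M p i)" if "p \<in> U" for p
  proof -
    have "M p (X p) = M p (\<Sum>i\<in>Basis. (X p \<bullet> i) *\<^sub>R i)"
      by (simp add: euclidean_representation)
    also have "\<dots> = (\<Sum>i\<in>Basis. (X p \<bullet> i) *\<^sub>R M p i)"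
      by (simp add: linear_sum[OF assms(1)[OF that]] linear_scale[OF assms(1)[OF that]])
    finally show ?thesis .
  qed
  have "smooth_on U (\<lambda>p. \<Sum>i\<in>Basis. (X p \<bullet> i) *\<^sub>R M p i)"
    using assms(2,3) by (intro smooth_on_sum smooth_on_scaleR smooth_on_inner smooth_on_const) simp_all
  then show ?thesis by (simp add: smooth_on_cong[OF expand])
qed

end

section \<open>Derivations and Lie brackets\<close>

lemma vf_apply_cong_open:
  "open U \<Longrightarrow> p \<in> U \<Longrightarrow> (\<And>q. q \<in> U \<Longrightarrow> f q = h q) \<Longrightarrow> vf_apply X f p = vf_apply X h p"
  unfolding vf_apply_def using frechet_derivative_cong_open[of U p f h] by simp

lemma vf_apply_locally_const:
  "open U \<Longrightarrow> p \<in> U \<Longrightarrow> (\<And>q. q \<in> U \<Longrightarrow> f q = c) \<Longrightarrow> vf_apply X f p = 0"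
  using vf_apply_cong_open[of U p f "\<lambda>_. c" X] by (simp add: vf_apply_def)

lemma vf_apply_add_field:
  "f differentiable (at p) \<Longrightarrow> vf_apply (\<lambda>q. X q + Y q) f p = vf_apply X f p + vf_apply Y f p"
  unfolding vf_apply_def by (simp add: linear_add[OF linear_frechet_derivative])

lemma vf_apply_scaleR_field:
  "f differentiable (at p) \<Longrightarrow> vf_apply (\<lambda>q. c q *\<^sub>R X q) f p = c p * vf_apply X f p"
  unfolding vf_apply_def by (simp add: linear_scale[OF linear_frechet_derivative])

lemma vf_apply_add:
  "f differentiable (at p) \<Longrightarrow> h differentiable (at p) \<Longrightarrow>
    vf_apply X (\<lambda>q. f q + h q) p = vf_apply X f p + vf_apply X h p"
  unfolding vf_apply_def
  by (intro frechet_derivative_apply has_derivative_add has_frechet_derivative)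

lemma vf_apply_minus:
  "f differentiable (at p) \<Longrightarrow> vf_apply X (\<lambda>q. - f q) p = - vf_apply X f p"
  unfolding vf_apply_def
  by (intro frechet_derivative_apply has_derivative_minus has_frechet_derivative)

lemma vf_apply_mult:
  assumes "f differentiable (at p)" "h differentiable (at p)"
  shows "vf_apply X (\<lambda>q. f q * h q) p = f p * vf_apply X h p + vf_apply X f p * h p"
  unfolding vf_apply_def
  by (rule frechet_derivative_apply[OF has_derivative_mult[OF has_frechet_derivative has_frechet_derivative]])
    (fact assms)+

lemma lie_bracket_swap: "lie_bracket X Y p = - lie_bracket Y X p"
  unfolding lie_bracket_def by simp

lemma lie_bracket_self [simp]: "lie_bracket X X p = 0"
  unfolding lie_bracket_def by simp

lemma lie_bracket_cong_open:
  assumes "open U" "p \<in> U" "\<And>q. q \<in> U \<Longrightarrow> X q = X' q" "\<And>q. q \<in> U \<Longrightarrow> Y q = Y' q"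
  shows "lie_bracket X Y p = lie_bracket X' Y' p"
  unfolding lie_bracket_def
  using frechet_derivative_cong_open[OF assms(1,2,3)] frechet_derivative_cong_open[OF assms(1,2,4)]
    assms(2-4) by simp

lemma lie_bracket_add_left:
  assumes "X differentiable (at p)" "X' differentiable (at p)" "Y differentiable (at p)"
  shows "lie_bracket (\<lambda>q. X q + X' q) Y p = lie_bracket X Y p + lie_bracket X' Y p"
proof -
  have "frechet_derivative (\<lambda>q. X q + X' q) (at p) (Y p)
      = frechet_derivative X (at p) (Y p) + frechet_derivative X' (at p) (Y p)"
    using assms(1,2) by (intro frechet_derivative_apply has_derivative_add has_frechet_derivative)
  then show ?thesis
    unfolding lie_bracket_def by (simp add: linear_add[OF linear_frechet_derivative[OF assms(3)]])
qed

lemma lie_bracket_scaleR_left: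
  assumes "f differentiable (at p)" "X differentiable (at p)" "Y differentiable (at p)"
  shows "lie_bracket (\<lambda>q. f q *\<^sub>R X q) Y p = f p *\<^sub>R lie_bracket X Y p - vf_apply Y f p *\<^sub>R X p"
proof -
  have "frechet_derivative (\<lambda>q. f q *\<^sub>R X q) (at p) (Y p)
      = f p *\<^sub>R frechet_derivative X (at p) (Y p) + vf_apply Y f p *\<^sub>R X p"
    unfolding vf_apply_def using assms(1,2)
    by (intro frechet_derivative_apply has_derivative_scaleR has_frechet_derivative)
  then show ?thesis
    unfolding lie_bracket_def
    by (simp add: linear_scale[OF linear_frechet_derivative[OF assms(3)]] algebra_simps)
qed

lemma lie_bracket_scaleR_const_left:
  "X differentiable (at p) \<Longrightarrow> Y differentiable (at p) \<Longrightarrow>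
    lie_bracket (\<lambda>q. c *\<^sub>R X q) Y p = c *\<^sub>R lie_bracket X Y p"
  using lie_bracket_scaleR_left[of "\<lambda>_. c" p X Y] by (simp add: vf_apply_def)

lemma tensorial_sum:
  fixes T :: "('a::euclidean_space \<Rightarrow> 'b::real_normed_vector) \<Rightarrow> 'v::real_vector"
  assumes "open U"
    and add: "\<And>X Y. smooth_on U X \<Longrightarrow> smooth_on U Y \<Longrightarrow> T (\<lambda>q. X q + Y q) = T X + T Y"
    and scale: "\<And>f X. smooth_on U f \<Longrightarrow> smooth_on U X \<Longrightarrow> T (\<lambda>q. f q *\<^sub>R X q) = f p *\<^sub>R T X"
    and "finite I"
    and "\<And>a. a \<in> I \<Longrightarrow> smooth_on U (c a)" "\<And>a. a \<in> I \<Longrightarrow> smooth_on U (e a)"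
  shows "T (\<lambda>q. \<Sum>a\<in>I. c a q *\<^sub>R e a q) = (\<Sum>a\<in>I. c a p *\<^sub>R T (e a))"
  using assms(4-6)
proof (induction I rule: finite_induct)
  case empty
  have "T (\<lambda>q. (\<lambda>_. 0::real) q *\<^sub>R (\<lambda>_. 0::'b) q) = (\<lambda>_. 0::real) p *\<^sub>R T (\<lambda>_. 0)"
    by (rule scale) (simp_all add: smooth_on_const[OF \<open>open U\<close>])
  then show ?case by simp
next
  case (insert a I)
  have "T (\<lambda>q. \<Sum>a\<in>insert a I. c a q *\<^sub>R e a q)
      = T (\<lambda>q. c a q *\<^sub>R e a q) + T (\<lambda>q. \<Sum>a\<in>I. c a q *\<^sub>R e a q)"
    using insert by (simp add: add smooth_on_sum smooth_on_scaleR \<open>open U\<close>)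
  with insert show ?case by (simp add: scale)
qed

section \<open>Riemannian metrics and orthonormal frames\<close>

lemma riemannian_metric_bilinear: "riemannian_metric U g \<Longrightarrow> p \<in> U \<Longrightarrow> bilinear (g p)"
  unfolding riemannian_metric_def by blast

lemma riemannian_metric_sym: "riemannian_metric U g \<Longrightarrow> p \<in> U \<Longrightarrow> g p v w = g p w v"
  unfolding riemannian_metric_def by blast

lemma smooth_on_metric_apply:
  assumes "open U" "riemannian_metric U g" "smooth_on U X" "smooth_on U Y"
  shows "smooth_on U (\<lambda>p. g p (X p) (Y p))"
proof (rule smooth_on_linear_apply[OF assms(1) _ _ assms(4)])
  show "linear (g p (X p))" if "p \<in> U" for p
    using riemannian_metric_bilinear[OF assms(2) that] by (simp add: bilinear_def)
  show "smooth_on U (\<lambda>p. g p (X p) w)" for w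
  proof (rule smooth_on_linear_apply[OF assms(1) _ _ assms(3)])
    show "linear (\<lambda>v. g p v w)" if "p \<in> U" for p
      using riemannian_metric_bilinear[OF assms(2) that] by (simp add: bilinear_def)
    show "smooth_on U (\<lambda>p. g p v w)" for v
      using assms(2) by (simp add: riemannian_metric_def)
  qed
qed

locale orthonormal_frame =
  fixes U :: "'a::euclidean_space set" and g :: "'a \<Rightarrow> 'a \<Rightarrow> 'a \<Rightarrow> real"
    and I :: "'i set" and e :: "'i \<Rightarrow> 'a \<Rightarrow> 'a"
  assumes open_U: "open U"
    and metric: "riemannian_metric U g"
    and finite_I: "finite I"
    and card_I: "card I = DIM('a)"
    and smooth_frame: "\<And>a. a \<in> I \<Longrightarrow> smooth_on U (e a)"
    and orthonormal: "\<And>q a b. q \<in> U \<Longrightarrow> a \<in> I \<Longrightarrow> b \<in> I \<Longrightarrow>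
      g q (e a q) (e b q) = (if a = b then 1 else 0)"
begin

lemma linear_metric_left: "q \<in> U \<Longrightarrow> linear (\<lambda>v. g q v w)"
  using riemannian_metric_bilinear[OF metric] by (simp add: bilinear_def)

lemma frame_sum_coeff:
  assumes "q \<in> U" "b \<in> I"
  shows "g q (\<Sum>a\<in>I. c a *\<^sub>R e a q) (e b q) = c b"
proof -
  have "g q (\<Sum>a\<in>I. c a *\<^sub>R e a q) (e b q) = (\<Sum>a\<in>I. c a * g q (e a q) (e b q))"
    by (simp add: linear_sum[OF linear_metric_left[OF assms(1)]] linear_scale[OF linear_metric_left[OF assms(1)]])
  also have "\<dots> = c b"
    using assms by (simp add: orthonormal finite_I if_distrib cong: if_cong)
  finally show ?thesis .
qed

lemma frame_inj: "q \<in> U \<Longrightarrow> inj_on (\<lambda>a. e a q) I"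
  by (rule inj_onI) (metis orthonormal zero_neq_one)

lemma frame_span:
  assumes q: "q \<in> U"
  shows "span ((\<lambda>a. e a q) ` I) = UNIV"
proof -
  define B where "B = (\<lambda>a. e a q) ` I"
  have finite_B: "finite B"
    unfolding B_def using finite_I by simp
  have "independent B"
  proof
    assume "dependent B"
    then obtain u w where "w \<in> B" "u w \<noteq> 0" "(\<Sum>w\<in>B. u w *\<^sub>R w) = 0"
      using dependent_finite[OF finite_B] by blast
    then obtain b where "b \<in> I" "u (e b q) \<noteq> 0" "(\<Sum>a\<in>I. u (e a q) *\<^sub>R e a q) = 0"
      unfolding B_def by (auto simp: sum.reindex[OF frame_inj[OF q]])
    then show False
      using frame_sum_coeff[OF q, of b "\<lambda>a. u (e a q)"] linear_0[OF linear_metric_left[OF q]]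
      by simp
  qed
  moreover have "card B = DIM('a)"
    unfolding B_def by (simp add: card_image[OF frame_inj[OF q]] card_I)
  ultimately show ?thesis
    unfolding B_def[symmetric] using card_ge_dim_independent[of B UNIV] by auto
qed

lemma frame_expansion:
  assumes q: "q \<in> U"
  shows "v = (\<Sum>a\<in>I. g q v (e a q) *\<^sub>R e a q)"
proof -
  obtain u where "v = (\<Sum>w\<in>(\<lambda>a. e a q) ` I. u w *\<^sub>R w)"
    using span_finite[of "(\<lambda>a. e a q) ` I"] frame_span[OF q] finite_I by auto
  then have u: "v = (\<Sum>a\<in>I. u (e a q) *\<^sub>R e a q)"
    by (simp add: sum.reindex[OF frame_inj[OF q]])
  then have "g q v (e b q) = u (e b q)" if "b \<in> I" for b
    using frame_sum_coeff[OF q that] by simp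
  with u show ?thesis
    by (metis (no_types, lifting) sum.cong)
qed

lemma linear_frame_expansion:
  assumes "q \<in> U" "linear f"
  shows "f v = (\<Sum>a\<in>I. g q v (e a q) *\<^sub>R f (e a q))"
proof -
  have "f v = f (\<Sum>a\<in>I. g q v (e a q) *\<^sub>R e a q)"
    using frame_expansion[OF assms(1), of v] by (rule arg_cong)
  also have "\<dots> = (\<Sum>a\<in>I. g q v (e a q) *\<^sub>R f (e a q))"
    by (simp add: linear_sum[OF assms(2)] linear_scale[OF assms(2)])
  finally show ?thesis .
qed

lemma linear_eq_on_frame:
  assumes "q \<in> U" "linear f" "linear h" "\<And>a. a \<in> I \<Longrightarrow> f (e a q) = h (e a q)"
  shows "f v = h v"
  using linear_eq_on_span[OF assms(2,3), of "(\<lambda>a. e a q) ` I"] frame_span[OF assms(1)] assms(4)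
  by blast

lemma bilinear_eq_on_frame:
  assumes "q \<in> U" "bilinear f" "bilinear h"
    and "\<And>a b. a \<in> I \<Longrightarrow> b \<in> I \<Longrightarrow> f (e a q) (e b q) = h (e a q) (e b q)"
  shows "f v w = h v w"
  by (rule bilinear_eq[OF assms(2,3), of UNIV "(\<lambda>a. e a q) ` I" UNIV "(\<lambda>a. e a q) ` I"])
    (auto simp: assms(4) frame_span[OF assms(1)])

lemma smooth_frame_coeff: "smooth_on U X \<Longrightarrow> a \<in> I \<Longrightarrow> smooth_on U (\<lambda>q. g q (X q) (e a q))"
  by (rule smooth_on_metric_apply[OF open_U metric _ smooth_frame])

lemma frame_tensorial:
  fixes T :: "('a \<Rightarrow> 'a) \<Rightarrow> 'v::real_vector"
  assumes local: "\<And>X X'. (\<And>q. q \<in> U \<Longrightarrow> X q = X' q) \<Longrightarrow> T X = T X'"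
    and add: "\<And>X Y. smooth_on U X \<Longrightarrow> smooth_on U Y \<Longrightarrow> T (\<lambda>q. X q + Y q) = T X + T Y"
    and scale: "\<And>f X. smooth_on U f \<Longrightarrow> smooth_on U X \<Longrightarrow> T (\<lambda>q. f q *\<^sub>R X q) = f p *\<^sub>R T X"
    and X: "smooth_on U X"
  shows "T X = (\<Sum>a\<in>I. g p (X p) (e a p) *\<^sub>R T (e a))"
proof -
  have "T X = T (\<lambda>q. \<Sum>a\<in>I. g q (X q) (e a q) *\<^sub>R e a q)"
    by (rule local) (rule frame_expansion)
  also have "\<dots> = (\<Sum>a\<in>I. g p (X p) (e a p) *\<^sub>R T (e a))"
    by (rule tensorial_sum[OF open_U add scale finite_I]) (simp_all add: smooth_frame_coeff X smooth_frame)
  finally show ?thesis .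
qed

end

section \<open>Almost complex and almost Hermitian structures\<close>

locale almost_complex =
  fixes U :: "'a::euclidean_space set" and J :: "'a \<Rightarrow> 'a \<Rightarrow> 'a"
  assumes open_U: "open U"
    and acs: "almost_complex_structure U J"
begin

lemma linear_J: "p \<in> U \<Longrightarrow> linear (J p)"
  using acs by (simp add: almost_complex_structure_def)

lemma J_J [simp]: "p \<in> U \<Longrightarrow> J p (J p v) = - v"
  using acs by (simp add: almost_complex_structure_def)

lemmas J_linear_simps =
  linear_add[OF linear_J] linear_diff[OF linear_J] linear_scale[OF linear_J] linear_neg[OF linear_J]

lemma smooth_acs_apply: "smooth_on U X \<Longrightarrow> smooth_on U (acs_apply J X)"
  unfolding acs_apply_def
  by (rule smooth_on_linear_apply[OF open_U linear_J]) (use acs in \<open>simp_all add: almost_complex_structure_def\<close>)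

lemma differentiable_acs_apply: "smooth_on U X \<Longrightarrow> p \<in> U \<Longrightarrow> acs_apply J X differentiable (at p)"
  by (rule smooth_on_differentiable[OF open_U smooth_acs_apply])

lemma nijenhuis_cong_left:
  assumes p: "p \<in> U" and X: "\<And>q. q \<in> U \<Longrightarrow> X q = X' q"
  shows "nijenhuis J X Y p = nijenhuis J X' Y p"
proof -
  have JX: "\<And>q. q \<in> U \<Longrightarrow> acs_apply J X q = acs_apply J X' q"
    using X by (simp add: acs_apply_def)
  have "lie_bracket (acs_apply J X) W p = lie_bracket (acs_apply J X') W p" for W
    by (rule lie_bracket_cong_open[OF open_U p JX refl])
  moreover have "lie_bracket X W p = lie_bracket X' W p" for W
    by (rule lie_bracket_cong_open[OF open_U p X refl])
  ultimately show ?thesis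
    unfolding nijenhuis_def by simp
qed

lemma nijenhuis_swap: "p \<in> U \<Longrightarrow> nijenhuis J X Y p = - nijenhuis J Y X p"
  unfolding nijenhuis_def
  using lie_bracket_swap[of X Y p] lie_bracket_swap[of "acs_apply J X" "acs_apply J Y" p]
    lie_bracket_swap[of "acs_apply J X" Y p] lie_bracket_swap[of X "acs_apply J Y" p]
  by (simp add: J_linear_simps algebra_simps)

lemma nijenhuis_add_left:
  assumes p: "p \<in> U" and "smooth_on U X" "smooth_on U X'" "smooth_on U Y"
  shows "nijenhuis J (\<lambda>q. X q + X' q) Y p = nijenhuis J X Y p + nijenhuis J X' Y p"
proof -
  have "lie_bracket (acs_apply J (\<lambda>q. X q + X' q)) W p
      = lie_bracket (\<lambda>q. acs_apply J X q + acs_apply J X' q) W p" for W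
    by (rule lie_bracket_cong_open[OF open_U p]) (simp_all add: acs_apply_def J_linear_simps)
  then show ?thesis
    using assms
    by (simp add: nijenhuis_def lie_bracket_add_left smooth_on_differentiable[OF open_U]
        differentiable_acs_apply J_linear_simps)
qed

lemma nijenhuis_scaleR_left:
  assumes p: "p \<in> U" and "smooth_on U f" "smooth_on U X" "smooth_on U Y"
  shows "nijenhuis J (\<lambda>q. f q *\<^sub>R X q) Y p = f p *\<^sub>R nijenhuis J X Y p"
proof -
  have "lie_bracket (acs_apply J (\<lambda>q. f q *\<^sub>R X q)) W p
      = lie_bracket (\<lambda>q. f q *\<^sub>R acs_apply J X q) W p" for W
    by (rule lie_bracket_cong_open[OF open_U p]) (simp_all add: acs_apply_def J_linear_simps)
  moreover have "acs_apply J X p = J p (X p)"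
    by (simp add: acs_apply_def)
  ultimately show ?thesis
    using assms
    by (simp add: nijenhuis_def lie_bracket_scaleR_left smooth_on_differentiable[OF open_U]
        differentiable_acs_apply J_linear_simps algebra_simps)
qed

end

locale almost_hermitian = almost_complex +
  fixes g :: "'a::euclidean_space \<Rightarrow> 'a \<Rightarrow> 'a \<Rightarrow> real"
  assumes metric: "riemannian_metric U g"
    and compatible: "\<And>p v w. p \<in> U \<Longrightarrow> g p (J p v) (J p w) = g p v w"
begin

abbreviation \<omega> where "\<omega> \<equiv> fundamental_form g J"

lemmas metric_simps =
  bilinear_ladd[OF riemannian_metric_bilinear[OF metric]] bilinear_radd[OF riemannian_metric_bilinear[OF metric]]
  bilinear_lmul[OF riemannian_metric_bilinear[OF metric]] bilinear_rmul[OF riemannian_metric_bilinear[OF metric]]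
  bilinear_lneg[OF riemannian_metric_bilinear[OF metric]] bilinear_rneg[OF riemannian_metric_bilinear[OF metric]]
  bilinear_lsub[OF riemannian_metric_bilinear[OF metric]] bilinear_rsub[OF riemannian_metric_bilinear[OF metric]]
  bilinear_lzero[OF riemannian_metric_bilinear[OF metric]] bilinear_rzero[OF riemannian_metric_bilinear[OF metric]]

lemma fundamental_form_skew: "p \<in> U \<Longrightarrow> g p (J p u) v = - g p (J p v) u"
  by (metis J_J compatible metric metric_simps(6) riemannian_metric_sym)

lemma smooth_fundamental_form: "smooth_on U X \<Longrightarrow> smooth_on U Y \<Longrightarrow> smooth_on U (\<omega> X Y)"
  unfolding fundamental_form_def
  using smooth_on_metric_apply[OF open_U metric smooth_acs_apply] by (simp add: acs_apply_def)

lemma differentiable_fundamental_form: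
  "smooth_on U X \<Longrightarrow> smooth_on U Y \<Longrightarrow> p \<in> U \<Longrightarrow> \<omega> X Y differentiable (at p)"
  by (rule smooth_on_differentiable[OF open_U smooth_fundamental_form])

lemma ext_deriv2_cong_left:
  assumes p: "p \<in> U" and X: "\<And>q. q \<in> U \<Longrightarrow> X q = X' q"
  shows "ext_deriv2 \<omega> X Y Z p = ext_deriv2 \<omega> X' Y Z p"
proof -
  have "vf_apply W (\<omega> X V) p = vf_apply W (\<omega> X' V) p" for W V
    by (rule vf_apply_cong_open[OF open_U p]) (simp add: fundamental_form_def X)
  moreover have "lie_bracket X V p = lie_bracket X' V p" for V
    by (rule lie_bracket_cong_open[OF open_U p X refl])
  ultimately show ?thesis
    unfolding ext_deriv2_def using X[OF p] by (simp add: fundamental_form_def vf_apply_def)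
qed

lemma ext_deriv2_swap_12:
  assumes p: "p \<in> U" and "smooth_on U X" "smooth_on U Y"
  shows "ext_deriv2 \<omega> Y X Z p = - ext_deriv2 \<omega> X Y Z p"
proof -
  have "vf_apply Z (\<omega> Y X) p = vf_apply Z (\<lambda>q. - \<omega> X Y q) p"
    by (rule vf_apply_cong_open[OF open_U p]) (unfold fundamental_form_def, rule fundamental_form_skew)
  also have "\<dots> = - vf_apply Z (\<omega> X Y) p"
    using assms by (simp add: vf_apply_minus differentiable_fundamental_form)
  finally show ?thesis
    unfolding ext_deriv2_def using p
    by (simp add: fundamental_form_def lie_bracket_swap[of Y X] J_linear_simps metric_simps)
qed

lemma ext_deriv2_swap_23:
  assumes p: "p \<in> U" and "smooth_on U Y" "smooth_on U Z"
  shows "ext_deriv2 \<omega> X Z Y p = - ext_deriv2 \<omega> X Y Z p"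
proof -
  have "vf_apply X (\<omega> Z Y) p = vf_apply X (\<lambda>q. - \<omega> Y Z q) p"
    by (rule vf_apply_cong_open[OF open_U p]) (unfold fundamental_form_def, rule fundamental_form_skew)
  also have "\<dots> = - vf_apply X (\<omega> Y Z) p"
    using assms by (simp add: vf_apply_minus differentiable_fundamental_form)
  finally show ?thesis
    unfolding ext_deriv2_def using p
    by (simp add: fundamental_form_def lie_bracket_swap[of Z Y] J_linear_simps metric_simps)
qed

lemma ext_deriv2_add_left:
  assumes p: "p \<in> U" and X: "smooth_on U X" and X': "smooth_on U X'"
    and Y: "smooth_on U Y" and Z: "smooth_on U Z"
  shows "ext_deriv2 \<omega> (\<lambda>q. X q + X' q) Y Z p = ext_deriv2 \<omega> X Y Z p + ext_deriv2 \<omega> X' Y Z p"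
proof -
  have vf: "vf_apply W (\<omega> (\<lambda>q. X q + X' q) V) p = vf_apply W (\<omega> X V) p + vf_apply W (\<omega> X' V) p"
    if "smooth_on U V" for W V
  proof -
    have "vf_apply W (\<omega> (\<lambda>q. X q + X' q) V) p = vf_apply W (\<lambda>q. \<omega> X V q + \<omega> X' V q) p"
      by (rule vf_apply_cong_open[OF open_U p]) (simp add: fundamental_form_def J_linear_simps metric_simps)
    then show ?thesis
      using X X' that p by (simp add: vf_apply_add differentiable_fundamental_form)
  qed
  have br: "lie_bracket (\<lambda>q. X q + X' q) V p = lie_bracket X V p + lie_bracket X' V p"
    if "smooth_on U V" for V
    using X X' that p by (intro lie_bracket_add_left smooth_on_differentiable[OF open_U])
  show ?thesis
    unfolding ext_deriv2_def vf[OF Y] vf[OF Z]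
      vf_apply_add_field[OF differentiable_fundamental_form[OF Y Z p]]
    unfolding fundamental_form_def br[OF Y] br[OF Z]
    using p by (simp add: J_linear_simps metric_simps)
qed

lemma ext_deriv2_scaleR_left:
  assumes p: "p \<in> U" and f: "smooth_on U f" and X: "smooth_on U X"
    and Y: "smooth_on U Y" and Z: "smooth_on U Z"
  shows "ext_deriv2 \<omega> (\<lambda>q. f q *\<^sub>R X q) Y Z p = f p *\<^sub>R ext_deriv2 \<omega> X Y Z p"
proof -
  have vf: "vf_apply W (\<omega> (\<lambda>q. f q *\<^sub>R X q) V) p = f p * vf_apply W (\<omega> X V) p + vf_apply W f p * \<omega> X V p"
    if "smooth_on U V" for W V
  proof -
    have "vf_apply W (\<omega> (\<lambda>q. f q *\<^sub>R X q) V) p = vf_apply W (\<lambda>q. f q * \<omega> X V q) p"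
      by (rule vf_apply_cong_open[OF open_U p]) (simp add: fundamental_form_def J_linear_simps metric_simps)
    then show ?thesis
      using f X that p by (simp add: vf_apply_mult differentiable_fundamental_form smooth_on_differentiable[OF open_U])
  qed
  have br: "lie_bracket (\<lambda>q. f q *\<^sub>R X q) V p = f p *\<^sub>R lie_bracket X V p - vf_apply V f p *\<^sub>R X p"
    if "smooth_on U V" for V
    using f X that p by (intro lie_bracket_scaleR_left smooth_on_differentiable[OF open_U])
  show ?thesis
    unfolding ext_deriv2_def vf[OF Y] vf[OF Z]
      vf_apply_scaleR_field[OF differentiable_fundamental_form[OF Y Z p]]
    unfolding fundamental_form_def br[OF Y] br[OF Z]
    using p by (simp add: J_linear_simps metric_simps algebra_simps)
qed

end

lemma (in orthonormal_frame) almost_hermitian_if_frame: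
  assumes linear: "\<And>p. p \<in> U \<Longrightarrow> linear (J p)"
    and JJ: "\<And>p a. p \<in> U \<Longrightarrow> a \<in> I \<Longrightarrow> J p (J p (e a p)) = - e a p"
    and compatible: "\<And>p a b. p \<in> U \<Longrightarrow> a \<in> I \<Longrightarrow> b \<in> I \<Longrightarrow>
      g p (J p (e a p)) (J p (e b p)) = g p (e a p) (e b p)"
    and smooth: "\<And>a. a \<in> I \<Longrightarrow> smooth_on U (\<lambda>p. J p (e a p))"
  shows "almost_hermitian U J g"
proof
  show "open U" "riemannian_metric U g"
    by (fact open_U metric)+
  have "J p (J p v) = - v" if "p \<in> U" for p v
    using linear_eq_on_frame[OF that, of "J p \<circ> J p" uminus] linear_compose[OF linear linear]
      linear_uminus JJ that by simp
  moreover have "smooth_on U (\<lambda>p. J p v)" for v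
  proof -
    have expand: "\<And>p. p \<in> U \<Longrightarrow> J p v = (\<Sum>a\<in>I. g p v (e a p) *\<^sub>R J p (e a p))"
      using linear_frame_expansion linear by blast
    have "smooth_on U (\<lambda>p. \<Sum>a\<in>I. g p v (e a p) *\<^sub>R J p (e a p))"
      by (intro smooth_on_sum[OF open_U] finite_I smooth_on_scaleR[OF open_U] smooth
          smooth_frame_coeff smooth_on_const[OF open_U])
    then show ?thesis
      by (simp add: smooth_on_cong[OF open_U expand])
  qed
  ultimately show "almost_complex_structure U J"
    using linear by (simp add: almost_complex_structure_def)
  show "g p (J p v) (J p w) = g p v w" if "p \<in> U" for p v w
  proof (rule bilinear_eq_on_frame[OF that, of "\<lambda>v w. g p (J p v) (J p w)"])
    have "linear (g p u)" "linear (\<lambda>v. g p v u)" for u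
      using riemannian_metric_bilinear[OF metric that] by (simp_all add: bilinear_def)
    then show "bilinear (\<lambda>v w. g p (J p v) (J p w))"
      unfolding bilinear_def using linear_compose[OF linear[OF that], unfolded o_def] by blast
  qed (simp_all add: riemannian_metric_bilinear[OF metric that] compatible that)
qed

locale hermitian_frame = almost_hermitian U J g + orthonormal_frame U g I e
  for U :: "'a::euclidean_space set" and J g and I :: "'i set" and e
begin

lemma nijenhuis_eq_0_if_frame:
  assumes p: "p \<in> U" and frame: "\<And>a b. a \<in> I \<Longrightarrow> b \<in> I \<Longrightarrow> nijenhuis J (e a) (e b) p = 0"
    and X: "smooth_on U X" and Y: "smooth_on U Y"
  shows "nijenhuis J X Y p = 0"
proof -
  have expand: "nijenhuis J Z W p = (\<Sum>a\<in>I. g p (Z p) (e a p) *\<^sub>R nijenhuis J (e a) W p)"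
    if "smooth_on U Z" "smooth_on U W" for Z W
    using that
    by (intro frame_tensorial[where T = "\<lambda>X. nijenhuis J X W p"]
        nijenhuis_cong_left[OF p] nijenhuis_add_left[OF p] nijenhuis_scaleR_left[OF p]) simp_all
  have "nijenhuis J (e a) Y p = 0" if "a \<in> I" for a
    using expand[OF Y smooth_frame[OF that]] nijenhuis_swap[OF p, of "e a" Y] frame that by simp
  then show ?thesis
    using expand[OF X Y] by simp
qed

lemma ext_deriv2_eq_0_if_frame:
  assumes p: "p \<in> U"
    and frame: "\<And>a b c. a \<in> I \<Longrightarrow> b \<in> I \<Longrightarrow> c \<in> I \<Longrightarrow> ext_deriv2 \<omega> (e a) (e b) (e c) p = 0"
    and X: "smooth_on U X" and Y: "smooth_on U Y" and Z: "smooth_on U Z"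
  shows "ext_deriv2 \<omega> X Y Z p = 0"
proof -
  have expand: "ext_deriv2 \<omega> X' Y' Z' p = (\<Sum>a\<in>I. g p (X' p) (e a p) *\<^sub>R ext_deriv2 \<omega> (e a) Y' Z' p)"
    if "smooth_on U X'" "smooth_on U Y'" "smooth_on U Z'" for X' Y' Z'
    using that
    by (intro frame_tensorial[where T = "\<lambda>X. ext_deriv2 \<omega> X Y' Z' p"]
        ext_deriv2_cong_left[OF p] ext_deriv2_add_left[OF p] ext_deriv2_scaleR_left[OF p]) simp_all
  have frame_frame: "ext_deriv2 \<omega> (e b) (e a) Z p = 0" if "a \<in> I" "b \<in> I" for a b
  proof -
    have "ext_deriv2 \<omega> (e b) (e a) Z p = ext_deriv2 \<omega> Z (e b) (e a) p"
      using ext_deriv2_swap_23[OF p smooth_frame[OF that(1)] Z, of "e b"]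
        ext_deriv2_swap_12[OF p smooth_frame[OF that(2)] Z, of "e a"] by simp
    then show ?thesis
      using expand[OF Z smooth_frame[OF that(2)] smooth_frame[OF that(1)]] frame that by simp
  qed
  have "ext_deriv2 \<omega> (e a) Y Z p = 0" if "a \<in> I" for a
    using ext_deriv2_swap_12[OF p Y smooth_frame[OF that], of Z] expand[OF Y smooth_frame[OF that] Z]
      frame_frame that by simp
  then show ?thesis
    using expand[OF X Y Z] by simp
qed

lemma kaehler_on_if_frame:
  assumes "\<And>p a b. p \<in> U \<Longrightarrow> a \<in> I \<Longrightarrow> b \<in> I \<Longrightarrow> nijenhuis J (e a) (e b) p = 0"
    and "\<And>p a b c. p \<in> U \<Longrightarrow> a \<in> I \<Longrightarrow> b \<in> I \<Longrightarrow> c \<in> I \<Longrightarrow> ext_deriv2 \<omega> (e a) (e b) (e c) p = 0"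
  shows "kaehler_on U g J"
  unfolding kaehler_on_def smooth_vector_field_def
  using metric acs compatible nijenhuis_eq_0_if_frame ext_deriv2_eq_0_if_frame assms by blast

end

section \<open>The frame of the theorem\<close>

datatype frame_index = Fk | Ft | Fx nat | Fy nat

fun J_index :: "frame_index \<Rightarrow> frame_index" where
  "J_index Fk = Ft" | "J_index Ft = Fk" | "J_index (Fx i) = Fy i" | "J_index (Fy i) = Fx i"

fun J_sign :: "frame_index \<Rightarrow> real" where
  "J_sign Fk = 1" | "J_sign Ft = -1" | "J_sign (Fx i) = 1" | "J_sign (Fy i) = -1"

text \<open>The hypotheses of the theorem except \<open>n \<ge> 1\<close> and the smoothness of the structure
  functions, which the proof does not use.\<close>
locale kt_frame =
  fixes U :: "'a::euclidean_space set"
    and g :: "'a \<Rightarrow> 'a \<Rightarrow> 'a \<Rightarrow> real"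
    and J :: "'a \<Rightarrow> 'a \<Rightarrow> 'a"
    and n :: nat
    and k t :: "'a \<Rightarrow> 'a"
    and x y :: "nat \<Rightarrow> 'a \<Rightarrow> 'a"
    and A B C D E F G H N :: "nat \<Rightarrow> 'a \<Rightarrow> real"
    and L :: "'a \<Rightarrow> real"
  assumes dim: "DIM('a) = 2 * n + 2"
    and U_open: "open U"
    and metric: "riemannian_metric U g"
    and smooth_k: "smooth_vector_field U k"
    and smooth_t: "smooth_vector_field U t"
    and smooth_x: "\<And>i. i \<in> {1..n} \<Longrightarrow> smooth_vector_field U (x i)"
    and smooth_y: "\<And>i. i \<in> {1..n} \<Longrightarrow> smooth_vector_field U (y i)"
    and on_kk: "\<And>p. p \<in> U \<Longrightarrow> g p (k p) (k p) = 1"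
    and on_tt: "\<And>p. p \<in> U \<Longrightarrow> g p (t p) (t p) = 1"
    and on_kt: "\<And>p. p \<in> U \<Longrightarrow> g p (k p) (t p) = 0"
    and on_kx: "\<And>p i. p \<in> U \<Longrightarrow> i \<in> {1..n} \<Longrightarrow> g p (k p) (x i p) = 0"
    and on_ky: "\<And>p i. p \<in> U \<Longrightarrow> i \<in> {1..n} \<Longrightarrow> g p (k p) (y i p) = 0"
    and on_tx: "\<And>p i. p \<in> U \<Longrightarrow> i \<in> {1..n} \<Longrightarrow> g p (t p) (x i p) = 0"
    and on_ty: "\<And>p i. p \<in> U \<Longrightarrow> i \<in> {1..n} \<Longrightarrow> g p (t p) (y i p) = 0"
    and on_xx: "\<And>p i j. p \<in> U \<Longrightarrow> i \<in> {1..n} \<Longrightarrow> j \<in> {1..n} \<Longrightarrow>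
                  g p (x i p) (x j p) = (if i = j then 1 else 0)"
    and on_yy: "\<And>p i j. p \<in> U \<Longrightarrow> i \<in> {1..n} \<Longrightarrow> j \<in> {1..n} \<Longrightarrow>
                  g p (y i p) (y j p) = (if i = j then 1 else 0)"
    and on_xy: "\<And>p i j. p \<in> U \<Longrightarrow> i \<in> {1..n} \<Longrightarrow> j \<in> {1..n} \<Longrightarrow>
                  g p (x i p) (y j p) = 0"
    and br_xx: "\<And>p i j. p \<in> U \<Longrightarrow> i \<in> {1..n} \<Longrightarrow> j \<in> {1..n} \<Longrightarrow> i \<noteq> j \<Longrightarrow>
                  lie_bracket (x i) (x j) p = 0"
    and br_xy: "\<And>p i j. p \<in> U \<Longrightarrow> i \<in> {1..n} \<Longrightarrow> j \<in> {1..n} \<Longrightarrow> i \<noteq> j \<Longrightarrow>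
                  lie_bracket (x i) (y j) p = 0"
    and br_yy: "\<And>p i j. p \<in> U \<Longrightarrow> i \<in> {1..n} \<Longrightarrow> j \<in> {1..n} \<Longrightarrow> i \<noteq> j \<Longrightarrow>
                  lie_bracket (y i) (y j) p = 0"
    and br_kt: "\<And>p. p \<in> U \<Longrightarrow> lie_bracket k t p = L p *\<^sub>R (k p + t p)"
    and br_xiyi: "\<And>p i. p \<in> U \<Longrightarrow> i \<in> {1..n} \<Longrightarrow>
                  lie_bracket (x i) (y i) p = N i p *\<^sub>R (k p + t p)"
    and br_kx: "\<And>p i. p \<in> U \<Longrightarrow> i \<in> {1..n} \<Longrightarrow>
                  lie_bracket k (x i) p = A i p *\<^sub>R x i p + B i p *\<^sub>R y i p"
    and br_ky: "\<And>p i. p \<in> U \<Longrightarrow> i \<in> {1..n} \<Longrightarrow>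
                  lie_bracket k (y i) p = C i p *\<^sub>R x i p + D i p *\<^sub>R y i p"
    and br_tx: "\<And>p i. p \<in> U \<Longrightarrow> i \<in> {1..n} \<Longrightarrow>
                  lie_bracket t (x i) p = E i p *\<^sub>R x i p + F i p *\<^sub>R y i p"
    and br_ty: "\<And>p i. p \<in> U \<Longrightarrow> i \<in> {1..n} \<Longrightarrow>
                  lie_bracket t (y i) p = G i p *\<^sub>R x i p + H i p *\<^sub>R y i p"
    and rel1: "\<And>p i. p \<in> U \<Longrightarrow> i \<in> {1..n} \<Longrightarrow> A i p - D i p = F i p + G i p"
    and rel2: "\<And>p i. p \<in> U \<Longrightarrow> i \<in> {1..n} \<Longrightarrow> B i p + C i p = H i p - E i p"
    and rel3: "\<And>p i. p \<in> U \<Longrightarrow> i \<in> {1..n} \<Longrightarrow> N i p = A i p + D i p"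
    and rel4: "\<And>p i. p \<in> U \<Longrightarrow> i \<in> {1..n} \<Longrightarrow> N i p = - (E i p + H i p)"
    and J_lin: "\<And>p. p \<in> U \<Longrightarrow> linear (J p)"
    and J_k: "\<And>p. p \<in> U \<Longrightarrow> J p (k p) = t p"
    and J_t: "\<And>p. p \<in> U \<Longrightarrow> J p (t p) = - k p"
    and J_x: "\<And>p i. p \<in> U \<Longrightarrow> i \<in> {1..n} \<Longrightarrow> J p (x i p) = y i p"
    and J_y: "\<And>p i. p \<in> U \<Longrightarrow> i \<in> {1..n} \<Longrightarrow> J p (y i p) = - x i p"
begin

fun e :: "frame_index \<Rightarrow> 'a \<Rightarrow> 'a" where
  "e Fk = k" | "e Ft = t" | "e (Fx i) = x i" | "e (Fy i) = y i"

definition I :: "frame_index set" where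
  "I = {Fk, Ft} \<union> (Fx ` {1..n} \<union> Fy ` {1..n})"

lemma frame_index_cases [consumes 1]:
  assumes "a \<in> I"
  obtains "a = Fk" | "a = Ft" | i where "i \<in> {1..n}" "a = Fx i" | i where "i \<in> {1..n}" "a = Fy i"
  using assms unfolding I_def by blast

lemma card_I: "card I = 2 * n + 2"
proof -
  have "card (Fx ` {1..n} \<union> Fy ` {1..n}) = n + n"
    by (subst card_Un_disjoint) (auto simp: card_image inj_on_def)
  then show ?thesis
    unfolding I_def by (subst card_Un_disjoint) auto
qed

lemma J_index_in_I: "a \<in> I \<Longrightarrow> J_index a \<in> I"
  by (induction a) (auto simp: I_def)

lemma smooth_e: "a \<in> I \<Longrightarrow> smooth_on U (e a)"
  by (induction rule: frame_index_cases)
    (simp_all add: smooth_k smooth_t smooth_x smooth_y flip: smooth_vector_field_def)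

lemma J_e:
  assumes "p \<in> U" "a \<in> I"
  shows "J p (e a p) = J_sign a *\<^sub>R e (J_index a) p"
  using assms(2) by (cases rule: frame_index_cases) (simp_all add: assms(1) J_k J_t J_x J_y)

lemmas J_table = J_k J_t J_x J_y linear_add[OF J_lin] linear_diff[OF J_lin] linear_scale[OF J_lin]
  linear_neg[OF J_lin] linear_0[OF J_lin]

lemma inner_kt:
  assumes "p \<in> U"
  shows "g p (k p) (k p) = 1" "g p (t p) (t p) = 1" "g p (k p) (t p) = 0" "g p (t p) (k p) = 0"
  using assms on_kk on_tt on_kt riemannian_metric_sym[OF metric] by metis+

lemma inner_kt_xy:
  assumes "p \<in> U" "i \<in> {1..n}"
  shows "g p (k p) (x i p) = 0" "g p (x i p) (k p) = 0" "g p (k p) (y i p) = 0" "g p (y i p) (k p) = 0"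
    "g p (t p) (x i p) = 0" "g p (x i p) (t p) = 0" "g p (t p) (y i p) = 0" "g p (y i p) (t p) = 0"
  using assms on_kx on_ky on_tx on_ty riemannian_metric_sym[OF metric] by metis+

lemma inner_xy:
  assumes "p \<in> U" "i \<in> {1..n}" "j \<in> {1..n}"
  shows "g p (x i p) (x j p) = (if i = j then 1 else 0)" "g p (y i p) (y j p) = (if i = j then 1 else 0)"
    "g p (x i p) (y j p) = 0" "g p (y j p) (x i p) = 0"
  using assms on_xx on_yy on_xy riemannian_metric_sym[OF metric] by metis+

lemmas inner_table = inner_kt inner_kt_xy inner_xy

lemma e_orthonormal:
  assumes "p \<in> U" "a \<in> I" "b \<in> I"
  shows "g p (e a p) (e b p) = (if a = b then 1 else 0)"
  using assms(2,3)
  by (elim frame_index_cases) (simp_all add: inner_table assms(1))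

sublocale frame: orthonormal_frame U g I e
  using U_open metric card_I dim smooth_e e_orthonormal by unfold_locales (auto simp: I_def)

lemma almost_hermitian: "almost_hermitian U J g"
proof (rule frame.almost_hermitian_if_frame[OF J_lin])
  fix p a b assume p: "p \<in> U" and a: "a \<in> I" and b: "b \<in> I"
  from a show "J p (J p (e a p)) = - e a p"
    by (cases rule: frame_index_cases) (simp_all add: p J_table)
  from a b show "g p (J p (e a p)) (J p (e b p)) = g p (e a p) (e b p)"
    by (elim frame_index_cases)
      (simp_all add: p J_table inner_table bilinear_lneg bilinear_rneg riemannian_metric_bilinear[OF metric])
next
  fix a assume a: "a \<in> I"
  have "smooth_on U (\<lambda>p. J_sign a *\<^sub>R e (J_index a) p)"
    using smooth_e[OF J_index_in_I[OF a]] by (simp add: smooth_on_scaleR[OF U_open] smooth_on_const[OF U_open])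
  then show "smooth_on U (\<lambda>p. J p (e a p))"
    using smooth_on_cong[OF U_open J_e[OF _ a]] by simp
qed

sublocale hermitian_frame U J g I e
  using almost_hermitian frame.orthonormal_frame_axioms by (simp add: hermitian_frame_def)

lemma bracket_kt:
  assumes "p \<in> U"
  shows "lie_bracket k t p = L p *\<^sub>R (k p + t p)" "lie_bracket t k p = - (L p *\<^sub>R (k p + t p))"
  using assms br_kt lie_bracket_swap by metis+

lemma bracket_kt_xy:
  assumes "p \<in> U" "i \<in> {1..n}"
  shows "lie_bracket k (x i) p = A i p *\<^sub>R x i p + B i p *\<^sub>R y i p"
    "lie_bracket (x i) k p = - (A i p *\<^sub>R x i p + B i p *\<^sub>R y i p)"
    "lie_bracket k (y i) p = C i p *\<^sub>R x i p + D i p *\<^sub>R y i p"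
    "lie_bracket (y i) k p = - (C i p *\<^sub>R x i p + D i p *\<^sub>R y i p)"
    "lie_bracket t (x i) p = E i p *\<^sub>R x i p + F i p *\<^sub>R y i p"
    "lie_bracket (x i) t p = - (E i p *\<^sub>R x i p + F i p *\<^sub>R y i p)"
    "lie_bracket t (y i) p = G i p *\<^sub>R x i p + H i p *\<^sub>R y i p"
    "lie_bracket (y i) t p = - (G i p *\<^sub>R x i p + H i p *\<^sub>R y i p)"
  using assms br_kx br_ky br_tx br_ty lie_bracket_swap by metis+

lemma bracket_xy:
  assumes "p \<in> U" "i \<in> {1..n}" "j \<in> {1..n}"
  shows "lie_bracket (x i) (x j) p = 0" "lie_bracket (y i) (y j) p = 0"
    "lie_bracket (x i) (y j) p = (if i = j then N i p *\<^sub>R (k p + t p) else 0)"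
    "lie_bracket (y j) (x i) p = (if i = j then - (N i p *\<^sub>R (k p + t p)) else 0)"
  using assms br_xx br_yy br_xy br_xiyi lie_bracket_self lie_bracket_swap
  by (metis (no_types, lifting) minus_zero)+

lemmas bracket_table = bracket_kt bracket_kt_xy bracket_xy

lemma lie_bracket_J_e_left:
  assumes p: "p \<in> U" and a: "a \<in> I" and W: "W differentiable (at p)"
  shows "lie_bracket (acs_apply J (e a)) W p = J_sign a *\<^sub>R lie_bracket (e (J_index a)) W p"
proof -
  have "lie_bracket (acs_apply J (e a)) W p = lie_bracket (\<lambda>q. J_sign a *\<^sub>R e (J_index a) q) W p"
    by (rule lie_bracket_cong_open[OF U_open p]) (simp_all add: acs_apply_def J_e a)
  also have "\<dots> = J_sign a *\<^sub>R lie_bracket (e (J_index a)) W p"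
    using smooth_e[OF J_index_in_I[OF a]] W p
    by (simp add: lie_bracket_scaleR_const_left smooth_on_differentiable[OF U_open])
  finally show ?thesis .
qed

lemma nijenhuis_e:
  assumes p: "p \<in> U" and a: "a \<in> I" and b: "b \<in> I"
  shows "nijenhuis J (e a) (e b) p =
    (J_sign a * J_sign b) *\<^sub>R lie_bracket (e (J_index a)) (e (J_index b)) p
    - J_sign a *\<^sub>R J p (lie_bracket (e (J_index a)) (e b) p)
    - J_sign b *\<^sub>R J p (lie_bracket (e a) (e (J_index b)) p)
    - lie_bracket (e a) (e b) p"
proof -
  have diff: "c \<in> I \<Longrightarrow> e c differentiable (at p)" "c \<in> I \<Longrightarrow> acs_apply J (e c) differentiable (at p)" for c
    using p smooth_e by (simp_all add: smooth_on_differentiable[OF U_open] differentiable_acs_apply)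
  have "lie_bracket W (acs_apply J (e b)) p = J_sign b *\<^sub>R lie_bracket W (e (J_index b)) p"
    if "W differentiable (at p)" for W
    using lie_bracket_J_e_left[OF p b that] lie_bracket_swap[of W] by simp
  then show ?thesis
    unfolding nijenhuis_def
    using a b J_index_in_I diff
    by (simp add: lie_bracket_J_e_left[OF p] linear_scale[OF J_lin[OF p]])
qed

lemma nijenhuis_e_eq_0:
  assumes p: "p \<in> U" and a: "a \<in> I" and b: "b \<in> I"
  shows "nijenhuis J (e a) (e b) p = 0"
proof -
  have rels: "A i p = D i p + F i p + G i p" "H i p = B i p + C i p + E i p" if "i \<in> {1..n}" for i
    using rel1[OF p that] rel2[OF p that] by simp_all
  show ?thesis
    unfolding nijenhuis_e[OF p a b] using a b
    by (elim frame_index_cases) (simp_all add: p rels J_table bracket_table algebra_simps scaleR_add_left)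
qed

lemma ext_deriv2_e:
  assumes p: "p \<in> U" and a: "a \<in> I" and b: "b \<in> I" and c: "c \<in> I"
  shows "ext_deriv2 \<omega> (e a) (e b) (e c) p =
    - g p (J p (lie_bracket (e a) (e b) p)) (e c p)
    + g p (J p (lie_bracket (e a) (e c) p)) (e b p)
    - g p (J p (lie_bracket (e b) (e c) p)) (e a p)"
proof -
  have "\<omega> (e a') (e b') q = J_sign a' * (if J_index a' = b' then 1 else 0)"
    if "q \<in> U" "a' \<in> I" "b' \<in> I" for q a' b'
    using that J_index_in_I
    by (simp add: fundamental_form_def J_e e_orthonormal metric_simps del: mult_zero_right)
  then have "vf_apply W (\<omega> (e a') (e b')) p = 0" if "a' \<in> I" "b' \<in> I" for W a' b'
    using that by (intro vf_apply_locally_const[OF U_open p]) blast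
  then show ?thesis
    unfolding ext_deriv2_def using a b c by (simp add: fundamental_form_def)
qed

lemma ext_deriv2_e_eq_0:
  assumes p: "p \<in> U" and a: "a \<in> I" and b: "b \<in> I" and c: "c \<in> I"
  shows "ext_deriv2 \<omega> (e a) (e b) (e c) p = 0"
proof -
  have rels: "N i p = A i p + D i p" "H i p = - E i p - A i p - D i p" if "i \<in> {1..n}" for i
    using rel3[OF p that] rel4[OF p that] by simp_all
  show ?thesis
    unfolding ext_deriv2_e[OF p a b c] using a b c
    by (elim frame_index_cases)
      (simp_all add: p rels J_table bracket_table inner_table metric_simps algebra_simps)
qed

theorem kaehler: "kaehler_on U g J"
  by (rule kaehler_on_if_frame) (simp_all add: nijenhuis_e_eq_0 ext_deriv2_e_eq_0)

end

theorem proposition2p2: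
  fixes U :: "'a::euclidean_space set"
    and g :: "'a \<Rightarrow> 'a \<Rightarrow> 'a \<Rightarrow> real"
    and J :: "'a \<Rightarrow> 'a \<Rightarrow> 'a"
    and n :: nat
    and k t :: "'a \<Rightarrow> 'a"
    and x y :: "nat \<Rightarrow> 'a \<Rightarrow> 'a"
    and A B C D E F G H N :: "nat \<Rightarrow> 'a \<Rightarrow> real"
    and L :: "'a \<Rightarrow> real"
  assumes n: "n \<ge> 1"
    and dim: "DIM('a) = 2 * n + 2"
    and U_open: "open U"
    and metric: "riemannian_metric U g"
    and smooth_k: "smooth_vector_field U k"
    and smooth_t: "smooth_vector_field U t"
    and smooth_x: "\<And>i. i \<in> {1..n} \<Longrightarrow> smooth_vector_field U (x i)"
    and smooth_y: "\<And>i. i \<in> {1..n} \<Longrightarrow> smooth_vector_field U (y i)"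
    and smooth_coeffs: "\<And>i. i \<in> {1..n} \<Longrightarrow>
          smooth_on U (A i) \<and> smooth_on U (B i) \<and> smooth_on U (C i) \<and> smooth_on U (D i) \<and>
          smooth_on U (E i) \<and> smooth_on U (F i) \<and> smooth_on U (G i) \<and> smooth_on U (H i) \<and>
          smooth_on U (N i)"
    and smooth_L: "smooth_on U L"
    and on_kk: "\<And>p. p \<in> U \<Longrightarrow> g p (k p) (k p) = 1"
    and on_tt: "\<And>p. p \<in> U \<Longrightarrow> g p (t p) (t p) = 1"
    and on_kt: "\<And>p. p \<in> U \<Longrightarrow> g p (k p) (t p) = 0"
    and on_kx: "\<And>p i. p \<in> U \<Longrightarrow> i \<in> {1..n} \<Longrightarrow> g p (k p) (x i p) = 0"
    and on_ky: "\<And>p i. p \<in> U \<Longrightarrow> i \<in> {1..n} \<Longrightarrow> g p (k p) (y i p) = 0"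
    and on_tx: "\<And>p i. p \<in> U \<Longrightarrow> i \<in> {1..n} \<Longrightarrow> g p (t p) (x i p) = 0"
    and on_ty: "\<And>p i. p \<in> U \<Longrightarrow> i \<in> {1..n} \<Longrightarrow> g p (t p) (y i p) = 0"
    and on_xx: "\<And>p i j. p \<in> U \<Longrightarrow> i \<in> {1..n} \<Longrightarrow> j \<in> {1..n} \<Longrightarrow>
                  g p (x i p) (x j p) = (if i = j then 1 else 0)"
    and on_yy: "\<And>p i j. p \<in> U \<Longrightarrow> i \<in> {1..n} \<Longrightarrow> j \<in> {1..n} \<Longrightarrow>
                  g p (y i p) (y j p) = (if i = j then 1 else 0)"
    and on_xy: "\<And>p i j. p \<in> U \<Longrightarrow> i \<in> {1..n} \<Longrightarrow> j \<in> {1..n} \<Longrightarrow>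
                  g p (x i p) (y j p) = 0"
    and br_xx: "\<And>p i j. p \<in> U \<Longrightarrow> i \<in> {1..n} \<Longrightarrow> j \<in> {1..n} \<Longrightarrow> i \<noteq> j \<Longrightarrow>
                  lie_bracket (x i) (x j) p = 0"
    and br_xy: "\<And>p i j. p \<in> U \<Longrightarrow> i \<in> {1..n} \<Longrightarrow> j \<in> {1..n} \<Longrightarrow> i \<noteq> j \<Longrightarrow>
                  lie_bracket (x i) (y j) p = 0"
    and br_yy: "\<And>p i j. p \<in> U \<Longrightarrow> i \<in> {1..n} \<Longrightarrow> j \<in> {1..n} \<Longrightarrow> i \<noteq> j \<Longrightarrow>
                  lie_bracket (y i) (y j) p = 0"
    and br_kt: "\<And>p. p \<in> U \<Longrightarrow> lie_bracket k t p = L p *\<^sub>R (k p + t p)"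
    and br_xiyi: "\<And>p i. p \<in> U \<Longrightarrow> i \<in> {1..n} \<Longrightarrow>
                  lie_bracket (x i) (y i) p = N i p *\<^sub>R (k p + t p)"
    and br_kx: "\<And>p i. p \<in> U \<Longrightarrow> i \<in> {1..n} \<Longrightarrow>
                  lie_bracket k (x i) p = A i p *\<^sub>R x i p + B i p *\<^sub>R y i p"
    and br_ky: "\<And>p i. p \<in> U \<Longrightarrow> i \<in> {1..n} \<Longrightarrow>
                  lie_bracket k (y i) p = C i p *\<^sub>R x i p + D i p *\<^sub>R y i p"
    and br_tx: "\<And>p i. p \<in> U \<Longrightarrow> i \<in> {1..n} \<Longrightarrow>
                  lie_bracket t (x i) p = E i p *\<^sub>R x i p + F i p *\<^sub>R y i p"
    and br_ty: "\<And>p i. p \<in> U \<Longrightarrow> i \<in> {1..n} \<Longrightarrow>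
                  lie_bracket t (y i) p = G i p *\<^sub>R x i p + H i p *\<^sub>R y i p"
    and rel1: "\<And>p i. p \<in> U \<Longrightarrow> i \<in> {1..n} \<Longrightarrow> A i p - D i p = F i p + G i p"
    and rel2: "\<And>p i. p \<in> U \<Longrightarrow> i \<in> {1..n} \<Longrightarrow> B i p + C i p = H i p - E i p"
    and rel3: "\<And>p i. p \<in> U \<Longrightarrow> i \<in> {1..n} \<Longrightarrow> N i p = A i p + D i p"
    and rel4: "\<And>p i. p \<in> U \<Longrightarrow> i \<in> {1..n} \<Longrightarrow> N i p = - (E i p + H i p)"
    and J_lin: "\<And>p. p \<in> U \<Longrightarrow> linear (J p)"
    and J_k: "\<And>p. p \<in> U \<Longrightarrow> J p (k p) = t p"
    and J_t: "\<And>p. p \<in> U \<Longrightarrow> J p (t p) = - k p"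
    and J_x: "\<And>p i. p \<in> U \<Longrightarrow> i \<in> {1..n} \<Longrightarrow> J p (x i p) = y i p"
    and J_y: "\<And>p i. p \<in> U \<Longrightarrow> i \<in> {1..n} \<Longrightarrow> J p (y i p) = - x i p"
  shows "kaehler_on U g J"
proof -
  interpret kt_frame U g J n k t x y A B C D E F G H N L
    by (rule kt_frame.intro) (fact assms)+
  show ?thesis
    by (rule kaehler)
qed

end
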